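(* Let $f\in\mathcal{S}_G^{\ast}$ and let its inverse have the expansion $f^{-1}(w)=w+A_2w^2+A_3w^3+\cdots$ near $w=0$. Then $$|A_2|\le\frac12,\qquad |A_3|\le\frac5{12},\qquad |A_4|\le\frac{31}{72}.$$ The bounds on $|A_2|$ and $|A_3|$ are sharp.
   Context: Let $\mathcal{U}=\{z\in\mathbb{C}:|z|<1\}$. Let $\mathcal{S}$ denote the class of functions $f$ analytic and univalent in $\mathcal{U}$ normalized by $f(0)=0$, $f'(0)=1$; each such $f$ has an analytic inverse $f^{-1}$ on $|w|<1/4$. For analytic $g,h$ on $\mathcal{U}$, $g\prec h$ means there is an analytic $w$ on $\mathcal{U}$ with $w(0)=0$, $|w(z)|<1$, and $g(z)=h(w(z))$. Let $\Psi(z)=\frac{z}{\ln(1+z)}$ on $\mathcal{U}$ (principal branch, $\Psi(0)=1$). Define $\mathcal{S}_G^{\ast}=\{f\in\mathcal{S}: zf'(z)/f(z)\prec\Psi(z)\}$. "Sharp" means the bound is attained by some function in $\mathcal{S}_G^{\ast}$. *)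

theory Defs
  imports "HOL-Complex_Analysis.Complex_Analysis"
begin

abbreviation unit_disk :: "complex set" where
  "unit_disk \<equiv> ball 0 1"

definition subordinate :: "(complex \<Rightarrow> complex) \<Rightarrow> (complex \<Rightarrow> complex) \<Rightarrow> bool" where
  "subordinate g h \<longleftrightarrow> (\<exists>w. w holomorphic_on unit_disk \<and> w 0 = 0 \<and>
      (\<forall>z\<in>unit_disk. norm (w z) < 1 \<and> g z = h (w z)))"

definition class_S :: "(complex \<Rightarrow> complex) set" where
  "class_S = {f. f holomorphic_on unit_disk \<and> inj_on f unit_disk \<and> f 0 = 0 \<and> deriv f 0 = 1}"

definition Psi :: "complex \<Rightarrow> complex" where
  "Psi z = (if z = 0 then 1 else z / Ln (1 + z))"

definition starlike_quot :: "(complex \<Rightarrow> complex) \<Rightarrow> complex \<Rightarrow> complex" where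
  "starlike_quot f z = (if z = 0 then 1 else z * deriv f z / f z)"

definition class_SG :: "(complex \<Rightarrow> complex) set" where
  "class_SG = {f \<in> class_S. subordinate (starlike_quot f) Psi}"

text \<open>n-th Taylor coefficient at 0 of the inverse function f^{-1}
  (the inverse of f restricted to the unit disk; it is analytic near 0).\<close>
definition inv_coeff :: "(complex \<Rightarrow> complex) \<Rightarrow> nat \<Rightarrow> complex" where
  "inv_coeff f n = (deriv ^^ n) (inv_into unit_disk f) 0 / of_nat (fact n)"

end

(* Write z f'(z) / f(z) = Psi (w z) with a Schwarz function w z = c1 z + c2 z^2 + c3 z^3 + ...
   Comparing coefficients in z f' = Psi(w) f and in f^-1 (f z) = z, using
   Psi z = 1 + z/2 - z^2/12 + z^3/24 + ..., gives

     A2 = - c1/2,   A3 = 5/12 c1^2 - c2/4,   A4 = - (c3 - 10/3 c1 c2 + 31/12 c1^3) / 6.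

   The bounds for A2 and A3 follow from |c1| <= 1 and |c2| <= 1 - |c1|^2.  For A4, one step of
   the Schur algorithm writes c2 = (1 - |c1|^2) d1 and c3 = (1 - |c1|^2) (d2 - cnj c1 d1^2) with
   the coefficients of another Schwarz function, and the estimate reduces to a polynomial
   inequality in |c1|^2 and |d1|^2 that has a sum-of-squares certificate.
   Equality in the first two bounds holds for w z = z, that is for
   f z = z exp (integral from 0 to z of (Psi t - 1) / t), which is univalent because Re Psi > 0
   makes it starlike. *)

theory Submission
  imports Defs
begin

unbundle no vec_syntax

\<comment> \<open>Keep the coefficient index 1 from being rewritten to Suc 0.\<close>
declare One_nat_def [simp del]

section \<open>Power series expansions\<close>

lemma has_fps_expansion_cong_ball:
  fixes f g :: "complex \<Rightarrow> complex"
  assumes "r > 0" "\<And>z. z \<in> ball 0 r \<Longrightarrow> f z = g z"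
  shows "f has_fps_expansion F \<longleftrightarrow> g has_fps_expansion F"
proof -
  have "eventually (\<lambda>z. z \<in> ball 0 r) (nhds 0)"
    using assms(1) by (intro eventually_nhds_in_open) auto
  then have "eventually (\<lambda>z. f z = g z) (nhds 0)"
    by eventually_elim (rule assms(2))
  then show ?thesis
    by (rule has_fps_expansion_cong) (rule refl)
qed

lemma fps_expansion_eq_if_eq_on_ball:
  fixes f g :: "complex \<Rightarrow> complex"
  assumes "f has_fps_expansion F" "g has_fps_expansion G"
    and "r > 0" "\<And>z. z \<in> ball 0 r \<Longrightarrow> f z = g z"
  shows "F = G"
proof -
  have "f has_fps_expansion G \<longleftrightarrow> g has_fps_expansion G"
    using assms(3,4) by (rule has_fps_expansion_cong_ball)
  with assms(1,2) show ?thesis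
    using fps_expansion_unique_complex by blast
qed

lemma has_fps_expansion_fps_expansion_unit_disk:
  "f holomorphic_on ball 0 1 \<Longrightarrow> f has_fps_expansion fps_expansion f 0"
  by (rule has_fps_expansion_fps_expansion[of "ball 0 1"]) auto

lemma fps_expansion_nth_0: "fps_expansion f 0 $ 0 = f 0"
  by (simp add: fps_expansion_def)

lemma fps_expansion_nth_1: "fps_expansion f 0 $ 1 = deriv f 0"
  by (simp add: fps_expansion_def One_nat_def)

lemma fps_mult_nth_upto4:
  fixes A B :: "'a::comm_semiring_1 fps"
  shows "(A * B) $ 0 = A$0 * B$0"
    "(A * B) $ 1 = A$0 * B$1 + A$1 * B$0"
    "(A * B) $ 2 = A$0 * B$2 + A$1 * B$1 + A$2 * B$0"
    "(A * B) $ 3 = A$0 * B$3 + A$1 * B$2 + A$2 * B$1 + A$3 * B$0"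
    "(A * B) $ 4 = A$0 * B$4 + A$1 * B$3 + A$2 * B$2 + A$3 * B$1 + A$4 * B$0"
  by (simp_all add: fps_mult_nth atLeast0AtMost atMost_nat_numeral One_nat_def add_ac)

lemma fps_power_nth_upto4:
  fixes B :: "'a::comm_ring_1 fps"
  assumes "B $ 0 = 0"
  shows "(B^2) $ 1 = 0" "(B^2) $ 2 = (B$1)^2" "(B^2) $ 3 = 2 * B$1 * B$2"
    "(B^2) $ 4 = 2 * B$1 * B$3 + (B$2)^2"
    "(B^3) $ 1 = 0" "(B^3) $ 2 = 0" "(B^3) $ 3 = (B$1)^3" "(B^3) $ 4 = 3 * (B$1)^2 * B$2"
    "(B^4) $ 1 = 0" "(B^4) $ 2 = 0" "(B^4) $ 3 = 0" "(B^4) $ 4 = (B$1)^4"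
  unfolding power2_eq_square power3_eq_cube power4_eq_xxxx
  by (simp_all add: fps_mult_nth_upto4 assms algebra_simps)

lemma fps_compose_nth_upto4:
  fixes A B :: "'a::comm_ring_1 fps"
  assumes "B $ 0 = 0"
  shows "(A oo B) $ 1 = A$1 * B$1"
    "(A oo B) $ 2 = A$1 * B$2 + A$2 * (B$1)^2"
    "(A oo B) $ 3 = A$1 * B$3 + 2 * A$2 * B$1 * B$2 + A$3 * (B$1)^3"
    "(A oo B) $ 4 = A$1 * B$4 + A$2 * (2 * B$1 * B$3 + (B$2)^2) + 3 * A$3 * (B$1)^2 * B$2
       + A$4 * (B$1)^4"
  by (simp_all add: fps_compose_nth atLeast0AtMost atMost_nat_numeral One_nat_def
      fps_power_nth_upto4[OF assms] assms)

definition diff_quot0 :: "(complex \<Rightarrow> complex) \<Rightarrow> complex \<Rightarrow> complex" where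
  "diff_quot0 f z = (if z = 0 then deriv f 0 else (f z - f 0) / z)"

lemma holomorphic_on_diff_quot0:
  assumes "f holomorphic_on ball 0 r"
  shows "diff_quot0 f holomorphic_on ball 0 r"
proof -
  have "(\<lambda>z. if z = 0 then deriv f 0 else (f z - f 0) / (z - 0)) holomorphic_on ball 0 r"
    using assms by (intro pole_lemma_open) auto
  then show ?thesis
    by (rule holomorphic_transform) (simp add: diff_quot0_def)
qed

lemma diff_quot0_0 [simp]: "diff_quot0 f 0 = deriv f 0"
  by (simp add: diff_quot0_def)

lemma diff_quot0_eq: "f z = f 0 + z * diff_quot0 f z"
  by (simp add: diff_quot0_def)

section \<open>The function Psi\<close>

definition Ln1p :: "complex \<Rightarrow> complex" where
  "Ln1p z = Ln (1 + z)"

lemma Re_one_plus_pos: "norm z < 1 \<Longrightarrow> Re (1 + z) > 0"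
  using abs_Re_le_cmod[of z] by simp

lemma holomorphic_on_Ln1p: "Ln1p holomorphic_on ball 0 1"
  unfolding Ln1p_def
  by (intro holomorphic_intros) (auto simp: complex_nonpos_Reals_iff dest!: Re_one_plus_pos)

lemma Ln1p_has_field_derivative:
  assumes "norm z < 1"
  shows "(Ln1p has_field_derivative inverse (1 + z)) (at z)"
proof -
  have "1 + z \<notin> \<real>\<^sub>\<le>\<^sub>0"
    using Re_one_plus_pos[OF assms] by (auto simp: complex_nonpos_Reals_iff)
  then have "((\<lambda>z. Ln (1 + z)) has_field_derivative inverse (1 + z) * 1) (at z)"
    by (intro DERIV_chain2[OF has_field_derivative_Ln]) (auto intro!: derivative_eq_intros)
  then show ?thesis
    by (simp add: Ln1p_def[abs_def])
qed

lemma deriv_Ln1p_0: "deriv Ln1p 0 = 1"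
  using Ln1p_has_field_derivative[of 0] by (simp add: DERIV_imp_deriv)

lemma has_fps_expansion_deriv_Ln1p: "deriv Ln1p has_fps_expansion inverse (1 + fps_X)"
proof -
  have "(\<lambda>z. inverse (1 + z)) has_fps_expansion inverse (1 + fps_X :: complex fps)"
    by (intro fps_expansion_intros) simp
  then show ?thesis
    by (subst has_fps_expansion_cong_ball[where r = 1 and g = "\<lambda>z. inverse (1 + z)"])
       (simp_all add: DERIV_imp_deriv Ln1p_has_field_derivative)
qed

lemma Ln1p_0 [simp]: "Ln1p 0 = 0"
  by (simp add: Ln1p_def)

lemma Ln1p_nonzero:
  assumes "norm z < 1" "z \<noteq> 0"
  shows "Ln1p z \<noteq> 0"
proof
  assume "Ln1p z = 0"
  moreover have "1 + z \<noteq> 0"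
    using Re_one_plus_pos[OF assms(1)] by (auto simp: complex_eq_iff)
  ultimately have "1 + z = exp 0"
    unfolding Ln1p_def by (metis exp_Ln)
  with assms(2) show False
    by simp
qed

lemma has_fps_expansion_Ln1p: "Ln1p has_fps_expansion fps_ln 1"
proof -
  have L: "Ln1p has_fps_expansion fps_expansion Ln1p 0"
    by (rule has_fps_expansion_fps_expansion_unit_disk[OF holomorphic_on_Ln1p])
  have "fps_deriv (fps_expansion Ln1p 0) = inverse (1 + fps_X)"
    using has_fps_expansion_deriv[OF L] has_fps_expansion_deriv_Ln1p
    by (rule fps_expansion_unique_complex)
  then have "fps_deriv (fps_expansion Ln1p 0) = fps_deriv (fps_ln 1)"
    by (simp add: fps_ln_deriv)
  then have "fps_expansion Ln1p 0 = fps_ln 1"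
    by (simp add: fps_deriv_eq_iff fps_expansion_nth_0)
  with L show ?thesis
    by simp
qed

lemma Psi_eq_inverse_diff_quot0:
  assumes "norm z < 1"
  shows "Psi z = inverse (diff_quot0 Ln1p z)"
  using assms by (simp add: Psi_def diff_quot0_def deriv_Ln1p_0 Ln1p_def field_simps)

lemma holomorphic_on_Psi: "Psi holomorphic_on ball 0 1"
proof -
  have "diff_quot0 Ln1p z \<noteq> 0" if "norm z < 1" for z
    using Ln1p_nonzero[OF that] by (simp add: diff_quot0_def deriv_Ln1p_0)
  then have "(\<lambda>z. inverse (diff_quot0 Ln1p z)) holomorphic_on ball 0 1"
    by (intro holomorphic_intros holomorphic_on_diff_quot0 holomorphic_on_Ln1p) simp
  then show ?thesis
    by (rule holomorphic_transform) (simp add: Psi_eq_inverse_diff_quot0)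
qed

lemma Psi_mult_Ln1p: "norm z < 1 \<Longrightarrow> Psi z * Ln1p z = z"
  using Ln1p_nonzero[of z] by (cases "z = 0") (auto simp: Psi_def Ln1p_def)

lemma fps_expansion_Psi_nth:
  "fps_expansion Psi 0 $ 0 = 1" "fps_expansion Psi 0 $ 1 = 1/2"
  "fps_expansion Psi 0 $ 2 = -1/12" "fps_expansion Psi 0 $ 3 = 1/24"
proof -
  define P where "P = fps_expansion Psi 0"
  have "(\<lambda>z. Psi z * Ln1p z) has_fps_expansion P * fps_ln 1"
    unfolding P_def
    by (intro has_fps_expansion_mult has_fps_expansion_Ln1p
        has_fps_expansion_fps_expansion_unit_disk[OF holomorphic_on_Psi])
  then have "P * fps_ln 1 = fps_X"
    by (rule fps_expansion_eq_if_eq_on_ball[OF _ has_fps_expansion_fps_X, where r = 1])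
       (simp_all add: Psi_mult_Ln1p)
  then have eq: "(P * fps_ln 1) $ n = fps_X $ n" for n
    by simp
  have P0: "P $ 0 = 1"
    by (simp add: P_def Psi_def fps_expansion_nth_0)
  have P1: "P $ 1 = 1/2"
    using eq[of 2] P0 by (simp add: fps_mult_nth_upto4 fps_ln_nth)
  have P2: "P $ 2 = -1/12"
    using eq[of 3] by (simp add: fps_mult_nth_upto4 fps_ln_nth P0 P1 add_eq_0_iff)
  have P3: "P $ 3 = 1/24"
    using eq[of 4] by (simp add: fps_mult_nth_upto4 fps_ln_nth P0 P1 P2 add_eq_0_iff)
  show "fps_expansion Psi 0 $ 0 = 1" "fps_expansion Psi 0 $ 1 = 1/2"
    "fps_expansion Psi 0 $ 2 = -1/12" "fps_expansion Psi 0 $ 3 = 1/24"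
    using P0 P1 P2 P3 by (simp_all add: P_def)
qed

lemma sin_squared_le_mult_sin:
  fixes \<theta> :: real
  assumes "\<bar>\<theta>\<bar> < pi"
  shows "(sin \<theta>)\<^sup>2 \<le> \<theta> * sin \<theta>"
proof -
  have nonneg: "0 \<le> \<theta> * sin \<theta>"
  proof (cases "0 \<le> \<theta>")
    case True
    then show ?thesis using assms sin_ge_zero[of \<theta>] by simp
  next
    case False
    then show ?thesis using assms sin_ge_zero[of "-\<theta>"] by (simp add: mult_nonpos_nonpos)
  qed
  have "(sin \<theta>)\<^sup>2 = \<bar>sin \<theta>\<bar> * \<bar>sin \<theta>\<bar>"
    by (simp add: power2_eq_square)
  also have "\<dots> \<le> \<bar>\<theta>\<bar> * \<bar>sin \<theta>\<bar>"
    by (intro mult_right_mono abs_sin_x_le_abs_x) auto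
  also have "\<dots> = \<theta> * sin \<theta>"
    using nonneg by (simp add: abs_mult[symmetric])
  finally show ?thesis .
qed

lemma mult_sub_one_ln_nonneg: "r > 0 \<Longrightarrow> (r - 1) * ln r \<ge> 0"
  for r :: real
  by (cases "r \<ge> 1") (auto intro: mult_nonpos_nonpos)

lemma mult_sub_one_ln_add_pos:
  fixes r c :: real
  assumes r: "r > 0" and c: "0 < c" "c < 1"
  shows "(r * c - 1) * ln r + r * (1 - c\<^sup>2) > 0"
proof -
  \<comment> \<open>The left-hand side is quadratic in c; interpolate between its values at c = 0 and c = 1.\<close>
  have "(r * c - 1) * ln r + r * (1 - c\<^sup>2)
      = (1 - c) * (r - ln r) + c * ((r - 1) * ln r) + r * c * (1 - c)"
    by (simp add: algebra_simps power2_eq_square)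
  moreover have "(1 - c) * (r - ln r) > 0"
    using c ln_le_minus_one[OF r] by simp
  moreover have "c * ((r - 1) * ln r) \<ge> 0" "r * c * (1 - c) \<ge> 0"
    using c r mult_sub_one_ln_nonneg[OF r] by simp_all
  ultimately show ?thesis
    by linarith
qed

lemma polar_Re_mult_cnj_Ln_pos:
  fixes r \<theta> :: real
  assumes r: "r > 0" and \<theta>: "\<bar>\<theta>\<bar> < pi/2" and not_one: "r \<noteq> 1 \<or> \<theta> \<noteq> 0"
  shows "(r * cos \<theta> - 1) * ln r + r * sin \<theta> * \<theta> > 0"
proof (cases "\<theta> = 0")
  case True
  with not_one r have "(r - 1) * ln r \<noteq> 0"
    by simp
  with mult_sub_one_ln_nonneg[OF r] have "(r - 1) * ln r > 0"
    by (metis order_le_neq_trans)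
  with True show ?thesis
    by simp
next
  case False
  then have "(sin \<theta>)\<^sup>2 > 0"
    using \<theta> by (simp add: sin_zero_pi_iff)
  moreover have "cos \<theta> > 0"
    using \<theta> by (simp add: cos_gt_zero_pi)
  moreover have "(cos \<theta>)\<^sup>2 < 1"
    using \<open>(sin \<theta>)\<^sup>2 > 0\<close> sin_cos_squared_add[of \<theta>] by linarith
  ultimately have "cos \<theta> < 1"
    by (simp add: power_less_one_iff)
  with \<open>cos \<theta> > 0\<close> have "(r * cos \<theta> - 1) * ln r + r * (sin \<theta>)\<^sup>2 > 0"
    using mult_sub_one_ln_add_pos[OF r] by (simp add: sin_squared_eq)
  moreover have "(sin \<theta>)\<^sup>2 \<le> \<theta> * sin \<theta>"
    using \<theta> by (intro sin_squared_le_mult_sin) linarith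
  then have "r * (sin \<theta>)\<^sup>2 \<le> r * sin \<theta> * \<theta>"
    using r by (simp add: mult_ac)
  ultimately show ?thesis
    by linarith
qed

lemma Re_divide_Ln_pos:
  assumes "Re v > 0" "v \<noteq> 1"
  shows "Re ((v - 1) / Ln v) > 0"
proof -
  define r \<theta> where "r = norm v" and "\<theta> = Im (Ln v)"
  have "v \<noteq> 0"
    using assms(1) by auto
  then have r: "r > 0" and Re_Ln: "Re (Ln v) = ln r"
    by (simp_all add: r_def)
  have v: "v = exp (Ln v)"
    using \<open>v \<noteq> 0\<close> by simp
  have Re_v: "Re v = r * cos \<theta>" and Im_v: "Im v = r * sin \<theta>"
    by (subst v; simp add: Re_exp Im_exp Re_Ln \<theta>_def r)+
  have "Ln v \<noteq> 0"
    using assms(2) v by auto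
  have "\<bar>\<theta>\<bar> < pi/2"
    using Re_Ln_pos_lt_imp[OF assms(1)] by (simp add: \<theta>_def)
  moreover have "r \<noteq> 1 \<or> \<theta> \<noteq> 0"
    using assms(2) Re_v Im_v by (auto simp: complex_eq_iff)
  ultimately have "(r * cos \<theta> - 1) * ln r + r * sin \<theta> * \<theta> > 0"
    using r by (rule polar_Re_mult_cnj_Ln_pos[rotated])
  then have "Re (v - 1) * Re (Ln v) + Im (v - 1) * Im (Ln v) > 0"
    by (simp add: Re_v Im_v Re_Ln \<theta>_def)
  then show ?thesis
    using \<open>Ln v \<noteq> 0\<close> by (simp add: Re_divide')
qed

lemma Re_Psi_pos:
  assumes "norm u < 1"
  shows "Re (Psi u) > 0"
proof (cases "u = 0")
  case False
  then have "Psi u = ((1 + u) - 1) / Ln (1 + u)"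
    by (simp add: Psi_def)
  also have "Re \<dots> > 0"
    using False Re_one_plus_pos[OF assms] by (intro Re_divide_Ln_pos) auto
  finally show ?thesis .
qed (simp add: Psi_def)

section \<open>Inverse coefficients in terms of the Schwarz function\<close>

lemma fps_compose_inverse_nth:
  fixes F G :: "'a::field fps"
  assumes F0: "F $ 0 = 0" and F1: "F $ 1 = 1" and GF: "G oo F = fps_X"
  shows "G $ 1 = 1" "G $ 2 = - F$2" "G $ 3 = 2 * (F$2)^2 - F$3"
    "G $ 4 = 5 * F$2 * F$3 - 5 * (F$2)^3 - F$4"
proof -
  have eq: "(G oo F) $ n = fps_X $ n" for n
    using GF by simp
  show G1: "G $ 1 = 1"
    using eq[of 1] by (simp add: fps_compose_nth_upto4 F0 F1)
  show G2: "G $ 2 = - F$2"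
    using eq[of 2] by (simp add: fps_compose_nth_upto4 F0 F1 G1 add_eq_0_iff)
  show G3: "G $ 3 = 2 * (F$2)^2 - F$3"
    using eq[of 3] by (simp add: fps_compose_nth_upto4 F0 F1 G1 G2 algebra_simps power2_eq_square)
  show "G $ 4 = 5 * F$2 * F$3 - 5 * (F$2)^3 - F$4"
    using eq[of 4]
    by (simp add: fps_compose_nth_upto4 F0 F1 G1 G2 G3 algebra_simps
        power2_eq_square power3_eq_cube)
qed

lemma fps_nth_of_deriv_eq_mult:
  fixes F H :: "'a::field_char_0 fps"
  assumes F0: "F $ 0 = 0" and F1: "F $ 1 = 1" and eq: "fps_X * fps_deriv F = H * F"
  shows "F $ 2 = H$1" "F $ 3 = ((H$1)^2 + H$2) / 2"
    "F $ 4 = ((H$1)^3 + 3 * H$1 * H$2 + 2 * H$3) / 6"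
proof -
  have e: "(fps_X * fps_deriv F) $ n = (H * F) $ n" for n
    using eq by simp
  have H0: "H $ 0 = 1"
    using e[of 1] by (simp add: fps_mult_nth_upto4 F0 F1)
  show F2: "F $ 2 = H$1"
    using e[of 2] by (simp add: fps_mult_nth_upto4 F0 F1 H0)
  show F3: "F $ 3 = ((H$1)^2 + H$2) / 2"
    using e[of 3] by (simp add: fps_mult_nth_upto4 F0 F1 H0 F2 field_simps power2_eq_square)
  show "F $ 4 = ((H$1)^3 + 3 * H$1 * H$2 + 2 * H$3) / 6"
    using e[of 4]
    by (simp add: fps_mult_nth_upto4 F0 F1 H0 F2 F3 field_simps power2_eq_square power3_eq_cube)
qed

lemma class_S_D:
  assumes "f \<in> class_S"
  shows "f holomorphic_on ball 0 1" "inj_on f (ball 0 1)" "f 0 = 0" "deriv f 0 = 1"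
  using assms by (auto simp: class_S_def)

lemma holomorphic_on_inv_into_image:
  assumes "f holomorphic_on S" "open S" "inj_on f S"
  shows "open (f ` S)" "inv_into S f holomorphic_on f ` S"
proof -
  show "open (f ` S)"
    using assms by (rule open_mapping_thm3)
  obtain g where g: "g holomorphic_on f ` S" "\<And>z. z \<in> S \<Longrightarrow> g (f z) = z"
    using holomorphic_has_inverse[OF assms] by metis
  show "inv_into S f holomorphic_on f ` S"
    using g(1) by (rule holomorphic_transform) (auto simp: g(2) assms(3))
qed

lemma fps_expansion_inv_into_compose:
  assumes "f \<in> class_S"
  shows "fps_expansion (inv_into (ball 0 1) f) 0 oo fps_expansion f 0 = fps_X"
proof -
  note f = class_S_D[OF assms]
  define g where "g = inv_into (ball 0 1) f"
  have "open (f ` ball 0 1)" "g holomorphic_on f ` ball 0 1"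
    unfolding g_def using f by (intro holomorphic_on_inv_into_image; simp)+
  moreover have "0 \<in> f ` ball 0 1"
    using f(3) by (metis centre_in_ball image_eqI zero_less_one)
  ultimately have "g has_fps_expansion fps_expansion g 0"
    by (intro has_fps_expansion_fps_expansion)
  moreover have "f has_fps_expansion fps_expansion f 0"
    using f(1) by (rule has_fps_expansion_fps_expansion_unit_disk)
  ultimately have gf: "(g \<circ> f) has_fps_expansion (fps_expansion g 0 oo fps_expansion f 0)"
    using f(3) by (intro has_fps_expansion_compose) (simp_all add: fps_expansion_nth_0)
  have "(g \<circ> f) z = z" if "z \<in> ball 0 1" for z
    using that f(2) by (simp add: g_def)
  then show ?thesis
    unfolding g_def[symmetric]
    by (intro fps_expansion_eq_if_eq_on_ball[OF gf has_fps_expansion_fps_X, where r = 1]) simp_all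
qed

lemma fps_expansion_starlike_quot_eq:
  assumes f: "f \<in> class_S" and w: "w holomorphic_on ball 0 1" "w 0 = 0"
    and p: "p holomorphic_on ball 0 1" and quot: "\<And>z. z \<in> ball 0 1 \<Longrightarrow> starlike_quot f z = p (w z)"
  shows "fps_X * fps_deriv (fps_expansion f 0)
           = (fps_expansion p 0 oo fps_expansion w 0) * fps_expansion f 0"
proof -
  note f = class_S_D[OF f]
  have F: "f has_fps_expansion fps_expansion f 0"
    using f(1) by (rule has_fps_expansion_fps_expansion_unit_disk)
  have "p has_fps_expansion fps_expansion p 0"
    using p by (rule has_fps_expansion_fps_expansion_unit_disk)
  moreover have "w has_fps_expansion fps_expansion w 0"
    using w(1) by (rule has_fps_expansion_fps_expansion_unit_disk)
  ultimately have "(p \<circ> w) has_fps_expansion (fps_expansion p 0 oo fps_expansion w 0)"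
    using w(2) by (intro has_fps_expansion_compose) (simp_all add: fps_expansion_nth_0)
  then have rhs: "(\<lambda>z. p (w z) * f z) has_fps_expansion
                   (fps_expansion p 0 oo fps_expansion w 0) * fps_expansion f 0"
    using F by (intro has_fps_expansion_mult) (simp_all add: o_def)
  have lhs: "(\<lambda>z. z * deriv f z) has_fps_expansion fps_X * fps_deriv (fps_expansion f 0)"
    using F by (intro has_fps_expansion_mult has_fps_expansion_fps_X has_fps_expansion_deriv)
  have eq: "z * deriv f z = p (w z) * f z" if z: "z \<in> ball 0 1" for z
  proof (cases "z = 0")
    case False
    then have "f z \<noteq> 0"
      using f z by (metis centre_in_ball inj_on_eq_iff zero_less_one)
    with quot[OF z] False show ?thesis
      by (simp add: starlike_quot_def field_simps)
  qed (simp add: f(3))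
  show ?thesis
    by (rule fps_expansion_eq_if_eq_on_ball[OF lhs rhs, where r = 1]) (simp_all add: eq)
qed

lemma inv_coeff_eq_fps_expansion: "inv_coeff f n = fps_expansion (inv_into (ball 0 1) f) 0 $ n"
  by (simp add: inv_coeff_def fps_expansion_def)

lemma inv_coeff_subordinate_Psi:
  assumes f: "f \<in> class_S" and w: "w holomorphic_on ball 0 1" "w 0 = 0"
    and quot: "\<And>z. z \<in> ball 0 1 \<Longrightarrow> starlike_quot f z = Psi (w z)"
  defines "c \<equiv> \<lambda>n. fps_expansion w 0 $ n"
  shows "inv_coeff f 2 = - c 1 / 2"
    "inv_coeff f 3 = 5/12 * (c 1)^2 - c 2 / 4"
    "inv_coeff f 4 = - (c 3 - 10/3 * c 1 * c 2 + 31/12 * (c 1)^3) / 6"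
proof -
  define F G H where "F = fps_expansion f 0" and "G = fps_expansion (inv_into (ball 0 1) f) 0"
    and "H = fps_expansion Psi 0 oo fps_expansion w 0"
  have W0: "fps_expansion w 0 $ 0 = 0"
    using w by (simp add: fps_expansion_nth_0)
  have F0: "F $ 0 = 0" and F1: "F $ 1 = 1"
    using class_S_D[OF f] by (simp_all add: F_def fps_expansion_nth_0 fps_expansion_nth_1)
  have H: "H $ 1 = c 1 / 2" "H $ 2 = c 2 / 2 - (c 1)^2 / 12"
    "H $ 3 = c 3 / 2 - c 1 * c 2 / 6 + (c 1)^3 / 24"
    by (simp_all add: H_def c_def fps_compose_nth_upto4[OF W0] fps_expansion_Psi_nth)
  have "fps_X * fps_deriv F = H * F"
    unfolding F_def H_def by (rule fps_expansion_starlike_quot_eq[OF f w holomorphic_on_Psi quot])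
  note F = fps_nth_of_deriv_eq_mult[OF F0 F1 this]
  have "G oo F = fps_X"
    unfolding F_def G_def by (rule fps_expansion_inv_into_compose[OF f])
  note G = fps_compose_inverse_nth[OF F0 F1 this]
  show "inv_coeff f 2 = - c 1 / 2"
    "inv_coeff f 3 = 5/12 * (c 1)^2 - c 2 / 4"
    "inv_coeff f 4 = - (c 3 - 10/3 * c 1 * c 2 + 31/12 * (c 1)^3) / 6"
    unfolding inv_coeff_eq_fps_expansion G_def[symmetric]
    by (simp_all add: G F H field_simps power2_eq_square power3_eq_cube)
qed

section \<open>Coefficient bounds for Schwarz functions\<close>

definition schwarz_function :: "(complex \<Rightarrow> complex) \<Rightarrow> bool" where
  "schwarz_function w \<longleftrightarrow>
     w holomorphic_on ball 0 1 \<and> w 0 = 0 \<and> (\<forall>z\<in>ball 0 1. norm (w z) < 1)"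

lemma schwarz_functionD:
  assumes "schwarz_function w"
  shows "w holomorphic_on ball 0 1" "w 0 = 0" "\<And>z. norm z < 1 \<Longrightarrow> norm (w z) < 1"
  using assms by (auto simp: schwarz_function_def)

lemma fps_expansion_linear:
  assumes "\<And>z. norm z < 1 \<Longrightarrow> w z = \<alpha> * z"
  shows "fps_expansion w 0 = fps_const \<alpha> * fps_X"
proof (rule fps_expansion_eqI)
  have "(\<lambda>z. \<alpha> * z) has_fps_expansion fps_const \<alpha> * fps_X"
    by (intro fps_expansion_intros)
  then show "w has_fps_expansion fps_const \<alpha> * fps_X"
    by (subst has_fps_expansion_cong_ball[where r = 1 and g = "\<lambda>z. \<alpha> * z"]) (simp_all add: assms)
qed

lemma schwarz_function_deriv_le:
  assumes "schwarz_function w"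
  shows "norm (deriv w 0) \<le> 1"
  using Schwarz_Lemma(2)[OF schwarz_functionD[OF assms], of 0] by simp

lemma deriv_eq_if_fps_expansion_linear:
  assumes "fps_expansion w 0 = fps_const \<alpha> * fps_X"
  shows "deriv w 0 = \<alpha>"
proof -
  have "fps_expansion w 0 $ 1 = \<alpha>"
    by (simp add: assms fps_const_mult_left)
  then show ?thesis
    by (simp add: fps_expansion_nth_1)
qed

lemma schwarz_function_rotation:
  assumes "schwarz_function w" "norm (deriv w 0) = 1"
  shows "fps_expansion w 0 = fps_const (deriv w 0) * fps_X"
proof -
  obtain \<alpha> where "\<And>z. norm z < 1 \<Longrightarrow> w z = \<alpha> * z"
    using Schwarz_Lemma(3)[OF schwarz_functionD[OF assms(1)], of 0] assms(2) by auto
  then have "fps_expansion w 0 = fps_const \<alpha> * fps_X"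
    by (rule fps_expansion_linear)
  moreover from this have "deriv w 0 = \<alpha>"
    by (rule deriv_eq_if_fps_expansion_linear)
  ultimately show ?thesis
    by simp
qed

lemma schwarz_function_norm_less:
  assumes w: "schwarz_function w" and "norm (deriv w 0) < 1" "norm z < 1" "z \<noteq> 0"
  shows "norm (w z) < norm z"
proof -
  have "norm (w z) \<noteq> norm z"
  proof
    assume "norm (w z) = norm z"
    then obtain \<alpha> where \<alpha>: "\<And>z. norm z < 1 \<Longrightarrow> w z = \<alpha> * z" "norm \<alpha> = 1"
      using Schwarz_Lemma(3)[OF schwarz_functionD[OF w], of 0] assms(3,4) by auto
    then have "fps_expansion w 0 = fps_const \<alpha> * fps_X"
      by (intro fps_expansion_linear) simp
    then have "deriv w 0 = \<alpha>"
      by (rule deriv_eq_if_fps_expansion_linear)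
    with \<alpha>(2) assms(2) show False
      by simp
  qed
  with Schwarz_Lemma(1)[OF schwarz_functionD[OF w] assms(3)] show ?thesis
    by simp
qed

definition schur_transform :: "(complex \<Rightarrow> complex) \<Rightarrow> complex \<Rightarrow> complex" where
  "schur_transform w = Moebius_function 0 (deriv w 0) \<circ> diff_quot0 w"

lemma norm_diff_quot0_less:
  assumes w: "schwarz_function w" and a: "norm (deriv w 0) < 1" and z: "norm z < 1"
  shows "norm (diff_quot0 w z) < 1"
proof (cases "z = 0")
  case False
  have "norm z * norm (diff_quot0 w z) < norm z"
    using schwarz_function_norm_less[OF w a z False] diff_quot0_eq[of w z]
    by (simp add: schwarz_functionD(2)[OF w] norm_mult)
  with False show ?thesis
    by simp
qed (use a in simp)

lemma schwarz_function_schur_transform: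
  assumes w: "schwarz_function w" and a: "norm (deriv w 0) < 1"
  shows "schwarz_function (schur_transform w)"
  unfolding schwarz_function_def schur_transform_def
proof (intro conjI ballI)
  have "diff_quot0 w ` ball 0 1 \<subseteq> ball 0 1"
    using norm_diff_quot0_less[OF w a] by auto
  with holomorphic_on_diff_quot0[OF schwarz_functionD(1)[OF w]]
  show "(Moebius_function 0 (deriv w 0) \<circ> diff_quot0 w) holomorphic_on ball 0 1"
    by (rule holomorphic_on_compose_gen[OF _ Moebius_function_holomorphic[OF a]])
  show "(Moebius_function 0 (deriv w 0) \<circ> diff_quot0 w) 0 = 0"
    by (simp add: Moebius_function_eq_zero)
  show "norm ((Moebius_function 0 (deriv w 0) \<circ> diff_quot0 w) z) < 1" if "z \<in> ball 0 1" for z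
    using norm_diff_quot0_less[OF w a] that by (simp add: Moebius_function_norm_lt_1[OF a])
qed

lemma schur_transform_mult_eq:
  assumes w: "schwarz_function w" and a: "norm (deriv w 0) < 1" and z: "norm z < 1"
  shows "schur_transform w z * (1 - cnj (deriv w 0) * diff_quot0 w z) = diff_quot0 w z - deriv w 0"
proof -
  have "norm (cnj (deriv w 0) * diff_quot0 w z) < 1 * 1"
    unfolding norm_mult complex_mod_cnj using a norm_diff_quot0_less[OF w a z]
    by (intro mult_strict_mono') simp_all
  then have "1 - cnj (deriv w 0) * diff_quot0 w z \<noteq> 0"
    by auto
  then show ?thesis
    by (simp add: schur_transform_def Moebius_function_simple)
qed

lemma fps_expansion_eq_fps_X_mult_diff_quot0:
  assumes "w holomorphic_on ball 0 1" "w 0 = 0"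
  shows "fps_expansion w 0 = fps_X * fps_expansion (diff_quot0 w) 0"
proof -
  have W: "w has_fps_expansion fps_expansion w 0"
    using assms(1) by (rule has_fps_expansion_fps_expansion_unit_disk)
  have "(\<lambda>z. z * diff_quot0 w z) has_fps_expansion fps_X * fps_expansion (diff_quot0 w) 0"
    using holomorphic_on_diff_quot0[OF assms(1)]
    by (intro fps_expansion_intros has_fps_expansion_fps_expansion_unit_disk)
  moreover have "w z = z * diff_quot0 w z" for z
    using diff_quot0_eq[of w z] by (simp add: assms(2))
  ultimately show ?thesis
    by (intro fps_expansion_eq_if_eq_on_ball[OF W, where r = 1]) simp_all
qed

lemma cnj_mult_self_eq: "1 - cnj a * a = complex_of_real (1 - (norm a)\<^sup>2)"
  using complex_norm_square[of a] by (simp add: mult.commute)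

lemma schur_transform_coeffs:
  assumes w: "schwarz_function w" and a: "norm (deriv w 0) < 1"
  defines "a \<equiv> deriv w 0" and "v \<equiv> schur_transform w"
  shows "fps_expansion w 0 $ 2 = of_real (1 - (norm a)\<^sup>2) * deriv v 0"
    "fps_expansion w 0 $ 3 =
       of_real (1 - (norm a)\<^sup>2) * (fps_expansion v 0 $ 2 - cnj a * (deriv v 0)\<^sup>2)"
proof -
  define \<Phi> V s where "\<Phi> = fps_expansion (diff_quot0 w) 0" and "V = fps_expansion v 0"
    and "s = complex_of_real (1 - (norm a)\<^sup>2)"
  have \<Phi>: "diff_quot0 w has_fps_expansion \<Phi>"
    unfolding \<Phi>_def
    by (intro has_fps_expansion_fps_expansion_unit_disk holomorphic_on_diff_quot0
        schwarz_functionD(1)[OF w])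
  have v: "schwarz_function v"
    unfolding v_def using w a by (rule schwarz_function_schur_transform)
  have V: "v has_fps_expansion V"
    unfolding V_def by (intro has_fps_expansion_fps_expansion_unit_disk schwarz_functionD(1)[OF v])
  have "(\<lambda>z. v z * (1 - cnj a * diff_quot0 w z)) has_fps_expansion V * (1 - fps_const (cnj a) * \<Phi>)"
    using \<Phi> V by (intro fps_expansion_intros)
  moreover have "(\<lambda>z. diff_quot0 w z - a) has_fps_expansion \<Phi> - fps_const a"
    using \<Phi> by (intro fps_expansion_intros)
  ultimately have "V * (1 - fps_const (cnj a) * \<Phi>) = \<Phi> - fps_const a"
    by (rule fps_expansion_eq_if_eq_on_ball[where r = 1])
       (simp_all add: schur_transform_mult_eq[OF w a] a_def v_def)
  then have V_eq: "(V * (1 - fps_const (cnj a) * \<Phi>)) $ n = (\<Phi> - fps_const a) $ n" for n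
    by simp
  have \<Phi>0: "\<Phi> $ 0 = a" and V0: "V $ 0 = 0"
    using schwarz_functionD(2)[OF v] by (simp_all add: \<Phi>_def V_def a_def fps_expansion_nth_0)
  have W: "fps_expansion w 0 $ 2 = \<Phi> $ 1" "fps_expansion w 0 $ 3 = \<Phi> $ 2"
    unfolding \<Phi>_def fps_expansion_eq_fps_X_mult_diff_quot0[OF schwarz_functionD(1,2)[OF w]]
    by (simp_all add: fps_mult_nth_upto4)
  have s: "1 - cnj a * a = s"
    by (simp add: s_def cnj_mult_self_eq)
  have V1: "V $ 1 * s = \<Phi> $ 1"
    using V_eq[of 1] by (simp add: fps_mult_nth_upto4 V0 \<Phi>0 s)
  have "V $ 1 * (- (cnj a * \<Phi> $ 1)) + V $ 2 * s = \<Phi> $ 2"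
    using V_eq[of 2] by (simp add: fps_mult_nth_upto4 V0 \<Phi>0 s)
  then have "\<Phi> $ 2 = s * (V $ 2 - cnj a * (V $ 1)\<^sup>2)"
    unfolding V1[symmetric] by (simp add: algebra_simps power2_eq_square)
  with V1 show "fps_expansion w 0 $ 2 = of_real (1 - (norm a)\<^sup>2) * deriv v 0"
    "fps_expansion w 0 $ 3 =
       of_real (1 - (norm a)\<^sup>2) * (fps_expansion v 0 $ 2 - cnj a * (deriv v 0)\<^sup>2)"
    by (simp_all add: W V_def fps_expansion_nth_1 s_def mult.commute)
qed

lemma coeff3_polynomial_ineq:
  fixes t y :: real
  assumes t: "0 \<le> t" "t \<le> 1" and y: "0 \<le> y" "y \<le> 1"
  shows "t * ((31/12)\<^sup>2 * t\<^sup>2 + 2 * (31/12) * t * (1 - t) * (y + 25/18) + (169/9) * (1 - t)\<^sup>2 * y)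
         \<le> (31/12 - (1 - t) + (1 - t) * y)\<^sup>2"
proof -
  define q0 where "q0 = (361/144) * (1 - t)\<^sup>2 + 2 * (171/32) * t * (1 - t) + (3317/432) * t\<^sup>2"
  define q1 where "q1 = (817/144) * (1 - t)\<^sup>2 + 2 * (35/288) * t * (1 - t) + (3317/432) * t\<^sup>2"
  have "q0 \<ge> 0" "q1 \<ge> 0"
    unfolding q0_def q1_def using t by (intro add_nonneg_nonneg mult_nonneg_nonneg; simp)+
  have "(31/12 - (1 - t) + (1 - t) * y)\<^sup>2
        - t * ((31/12)\<^sup>2 * t\<^sup>2 + 2 * (31/12) * t * (1 - t) * (y + 25/18) + (169/9) * (1 - t)\<^sup>2 * y)
      = (1 - y) * ((1 - t) * q0) + y * ((1 - t) * q1) + (1 - t)\<^sup>2 * y\<^sup>2"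
    unfolding q0_def q1_def by (simp add: field_simps power2_eq_square power3_eq_cube)
  moreover have "0 \<le> (1 - y) * ((1 - t) * q0) + y * ((1 - t) * q1) + (1 - t)\<^sup>2 * y\<^sup>2"
    using t y \<open>q0 \<ge> 0\<close> \<open>q1 \<ge> 0\<close> by (intro add_nonneg_nonneg mult_nonneg_nonneg) auto
  ultimately show ?thesis
    by linarith
qed

lemma norm_of_real_minus_sq:
  "(norm (complex_of_real c - u))\<^sup>2 = c\<^sup>2 - 2 * c * Re u + (norm u)\<^sup>2"
  unfolding cmod_power2 by (simp add: power2_eq_square algebra_simps)

lemma norm_of_real_minus_quadratic_sq_le:
  fixes \<beta> :: complex and s y c :: real
  assumes s: "0 \<le> s" and y: "norm \<beta> = y" "y \<le> 1" and c: "0 \<le> c"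
  shows "(norm (complex_of_real c - of_real s * (\<beta>\<^sup>2 + 10/3 * \<beta>)))\<^sup>2
     \<le> c\<^sup>2 + 2 * c * s * (y\<^sup>2 + 25/18) + (169/9) * s\<^sup>2 * y\<^sup>2"
proof -
  define u where "u = of_real s * (\<beta>\<^sup>2 + 10/3 * \<beta>)"
  have "y\<^sup>2 = (Re \<beta>)\<^sup>2 + (Im \<beta>)\<^sup>2"
    using y(1) by (simp add: cmod_power2[symmetric])
  then have Re_u_eq: "Re u = s * (2 * (Re \<beta>)\<^sup>2 - y\<^sup>2 + 10/3 * Re \<beta>)"
    by (simp add: u_def Re_power2 algebra_simps)
  have "- (y\<^sup>2 + 25/18) \<le> 2 * (Re \<beta>)\<^sup>2 - y\<^sup>2 + 10/3 * Re \<beta>"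
    using zero_le_power2[of "Re \<beta> + 5/6"] by (simp add: power2_eq_square algebra_simps)
  from mult_left_mono[OF this s] have Re_u: "- Re u \<le> s * (y\<^sup>2 + 25/18)"
    unfolding Re_u_eq by (simp add: algebra_simps)
  have "u = of_real s * (\<beta> * (\<beta> + 10/3))"
    by (simp add: u_def power2_eq_square algebra_simps)
  then have "norm u = s * (norm \<beta> * norm (\<beta> + 10/3))"
    using s by (simp add: norm_mult)
  also have "\<dots> \<le> s * (y * (13/3))"
  proof -
    have "norm (\<beta> + 10/3) \<le> 13/3"
      using norm_triangle_ineq[of \<beta> "10/3"] y by simp
    then show ?thesis
      using s y by (intro mult_left_mono mult_mono) auto
  qed
  finally have "(norm u)\<^sup>2 \<le> (s * (y * (13/3)))\<^sup>2"
    by (intro power_mono) auto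
  then have norm_u: "(norm u)\<^sup>2 \<le> (169/9) * s\<^sup>2 * y\<^sup>2"
    by (simp add: power2_eq_square algebra_simps)
  have "- 2 * c * Re u \<le> 2 * c * (s * (y\<^sup>2 + 25/18))"
    using mult_left_mono[OF Re_u, of "2 * c"] c by simp
  with norm_u show ?thesis
    unfolding u_def[symmetric] norm_of_real_minus_sq by (simp add: algebra_simps)
qed

lemma norm_coeff3_remainder_eq:
  fixes a d :: complex and s :: real
  assumes "a \<noteq> 0"
  defines "\<beta> \<equiv> d * cnj a / a"
  shows "norm (- (of_real s * (cnj a * d\<^sup>2)) - 10/3 * a * (of_real s * d) + 31/12 * a^3)
       = norm a * norm (of_real (31/12 * (norm a)\<^sup>2) - of_real s * (\<beta>\<^sup>2 + 10/3 * \<beta>))"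
proof -
  define R Z where "R = - (of_real s * (cnj a * d\<^sup>2)) - 10/3 * a * (of_real s * d) + 31/12 * a^3"
    and "Z = of_real (31/12 * (norm a)\<^sup>2) - of_real s * (\<beta>\<^sup>2 + 10/3 * \<beta>)"
  have "cnj a * R = a\<^sup>2 * (31/12 * (cnj a * a) - of_real s * (\<beta>\<^sup>2 + 10/3 * \<beta>))"
    using assms by (simp add: R_def \<beta>_def field_simps power2_eq_square power3_eq_cube)
  also have "\<dots> = a\<^sup>2 * Z"
    using complex_norm_square[of a] by (simp add: Z_def mult.commute)
  finally have "norm a * norm R = (norm a)\<^sup>2 * norm Z"
    by (metis norm_mult norm_power complex_mod_cnj)
  with assms(1) have "norm R = norm a * norm Z"
    by (simp add: power2_eq_square)
  then show ?thesis
    by (simp only: R_def Z_def)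
qed

lemma norm_coeff3_remainder_le:
  fixes a d :: complex
  assumes a: "norm a < 1" and d: "norm d \<le> 1"
  defines "s \<equiv> 1 - (norm a)\<^sup>2"
  shows "norm (- (of_real s * (cnj a * d\<^sup>2)) - 10/3 * a * (of_real s * d) + 31/12 * a^3)
           \<le> 31/12 - s * (1 - (norm d)\<^sup>2)"
proof -
  define x y where "x = norm a" and "y = norm d"
  have x: "0 \<le> x" "x < 1" and y: "0 \<le> y" "y \<le> 1" and s: "0 \<le> s" "s = 1 - x\<^sup>2"
    using a d by (auto simp: x_def y_def s_def power_le_one)
  have "s * (1 - y\<^sup>2) \<le> 1 * 1"
    using s x y by (intro mult_mono) (auto simp: power_le_one)
  then have bound_nonneg: "0 \<le> 31/12 - s * (1 - y\<^sup>2)"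
    by simp
  show ?thesis
  proof (cases "a = 0")
    case False
    define \<beta> where "\<beta> = d * cnj a / a"
    define Z where "Z = of_real (31/12 * x\<^sup>2) - of_real s * (\<beta>\<^sup>2 + 10/3 * \<beta>)"
    have "norm \<beta> = y"
      using False by (simp add: \<beta>_def y_def norm_mult norm_divide)
    then have "(norm Z)\<^sup>2
        \<le> (31/12 * x\<^sup>2)\<^sup>2 + 2 * (31/12 * x\<^sup>2) * s * (y\<^sup>2 + 25/18) + (169/9) * s\<^sup>2 * y\<^sup>2"
      unfolding Z_def using s y by (intro norm_of_real_minus_quadratic_sq_le) auto
    then have "(x * norm Z)\<^sup>2
        \<le> x\<^sup>2 * ((31/12 * x\<^sup>2)\<^sup>2 + 2 * (31/12 * x\<^sup>2) * s * (y\<^sup>2 + 25/18) + (169/9) * s\<^sup>2 * y\<^sup>2)"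
      unfolding power_mult_distrib by (rule mult_left_mono) simp
    also have "\<dots> = x\<^sup>2 * ((31/12)\<^sup>2 * (x\<^sup>2)\<^sup>2 + 2 * (31/12) * x\<^sup>2 * (1 - x\<^sup>2) * (y\<^sup>2 + 25/18)
                          + (169/9) * (1 - x\<^sup>2)\<^sup>2 * y\<^sup>2)"
      by (simp add: s power2_eq_square mult.assoc)
    also have "\<dots> \<le> (31/12 - (1 - x\<^sup>2) + (1 - x\<^sup>2) * y\<^sup>2)\<^sup>2"
      using x y by (intro coeff3_polynomial_ineq) (auto simp: power_le_one)
    also have "\<dots> = (31/12 - s * (1 - y\<^sup>2))\<^sup>2"
      by (simp add: s algebra_simps)
    finally have "x * norm Z \<le> 31/12 - s * (1 - y\<^sup>2)"
      using bound_nonneg by (rule power2_le_imp_le)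
    then show ?thesis
      using norm_coeff3_remainder_eq[OF False, of s d] by (simp add: x_def y_def Z_def \<beta>_def)
  qed (use bound_nonneg y_def in simp)
qed

lemma norm_Schur_coeff3_functional_le:
  fixes a d1 d2 :: complex
  assumes a: "norm a < 1" and d1: "norm d1 \<le> 1" and d2: "norm d2 \<le> 1 - (norm d1)\<^sup>2"
  defines "s \<equiv> 1 - (norm a)\<^sup>2"
  shows "norm (of_real s * (d2 - cnj a * d1\<^sup>2) - 10/3 * a * (of_real s * d1) + 31/12 * a^3)
           \<le> 31/12"
proof -
  define R where "R = - (of_real s * (cnj a * d1\<^sup>2)) - 10/3 * a * (of_real s * d1) + 31/12 * a^3"
  have "s \<ge> 0"
    using a by (simp add: s_def power_le_one)
  then have "norm (of_real s * d2) \<le> s * (1 - (norm d1)\<^sup>2)"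
    using d2 by (simp add: norm_mult mult_left_mono)
  moreover have "norm R \<le> 31/12 - s * (1 - (norm d1)\<^sup>2)"
    unfolding R_def s_def using a d1 by (rule norm_coeff3_remainder_le)
  moreover have "of_real s * (d2 - cnj a * d1\<^sup>2) - 10/3 * a * (of_real s * d1) + 31/12 * a^3
      = of_real s * d2 + R"
    by (simp add: R_def algebra_simps)
  ultimately show ?thesis
    using norm_triangle_ineq[of "of_real s * d2" R] by simp
qed

lemma schwarz_function_coeff2_le:
  assumes w: "schwarz_function w"
  shows "norm (fps_expansion w 0 $ 2) \<le> 1 - (norm (fps_expansion w 0 $ 1))\<^sup>2"
proof (cases "norm (deriv w 0) = 1")
  case True
  then show ?thesis
    using schwarz_function_rotation[OF w True] by (simp add: fps_expansion_nth_1)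
next
  case False
  then have a: "norm (deriv w 0) < 1"
    using schwarz_function_deriv_le[OF w] by simp
  define v where "v = schur_transform w"
  have v: "schwarz_function v"
    "fps_expansion w 0 $ 2 = of_real (1 - (norm (deriv w 0))\<^sup>2) * deriv v 0"
    unfolding v_def using schwarz_function_schur_transform[OF w a] schur_transform_coeffs[OF w a]
    by simp_all
  have "(norm (deriv w 0))\<^sup>2 \<le> 1"
    using a by (simp add: power_le_one)
  then have "norm (complex_of_real (1 - (norm (deriv w 0))\<^sup>2)) = 1 - (norm (deriv w 0))\<^sup>2"
    by (subst norm_of_real) linarith
  then have "norm (fps_expansion w 0 $ 2) = (1 - (norm (deriv w 0))\<^sup>2) * norm (deriv v 0)"
    by (simp only: v(2) norm_mult)
  also have "\<dots> \<le> 1 - (norm (deriv w 0))\<^sup>2"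
    using schwarz_function_deriv_le[OF v(1)] \<open>(norm (deriv w 0))\<^sup>2 \<le> 1\<close>
    by (simp add: mult_left_le)
  finally show ?thesis
    by (simp add: fps_expansion_nth_1)
qed

lemma schwarz_function_coeff3_functional_le:
  assumes w: "schwarz_function w"
  defines "c \<equiv> \<lambda>n. fps_expansion w 0 $ n"
  shows "norm (c 3 - 10/3 * c 1 * c 2 + 31/12 * (c 1)^3) \<le> 31/12"
proof (cases "norm (deriv w 0) = 1")
  case True
  then show ?thesis
    using schwarz_function_rotation[OF w True]
    by (simp add: c_def fps_expansion_nth_1 norm_mult norm_power)
next
  case False
  then have a: "norm (deriv w 0) < 1"
    using schwarz_function_deriv_le[OF w] by simp
  define v where "v = schur_transform w"
  have v: "schwarz_function v"
    "c 2 = of_real (1 - (norm (c 1))\<^sup>2) * deriv v 0"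
    "c 3 = of_real (1 - (norm (c 1))\<^sup>2) * (fps_expansion v 0 $ 2 - cnj (c 1) * (deriv v 0)\<^sup>2)"
    unfolding v_def c_def fps_expansion_nth_1
    using schwarz_function_schur_transform[OF w a] schur_transform_coeffs[OF w a] by simp_all
  have "norm (c 1) < 1"
    using a by (simp add: c_def fps_expansion_nth_1)
  moreover have "norm (deriv v 0) \<le> 1" "norm (fps_expansion v 0 $ 2) \<le> 1 - (norm (deriv v 0))\<^sup>2"
    using schwarz_function_deriv_le[OF v(1)] schwarz_function_coeff2_le[OF v(1)]
    by (simp_all add: fps_expansion_nth_1)
  ultimately show ?thesis
    unfolding v(2,3) by (rule norm_Schur_coeff3_functional_le)
qed

lemma class_SG_inv_coeff_le:
  assumes "f \<in> class_SG"
  shows "norm (inv_coeff f 2) \<le> 1/2" "norm (inv_coeff f 3) \<le> 5/12"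
    "norm (inv_coeff f 4) \<le> 31/72"
proof -
  obtain w where w: "w holomorphic_on ball 0 1" "w 0 = 0" "\<forall>z\<in>ball 0 1. norm (w z) < 1"
    and quot: "\<And>z. z \<in> ball 0 1 \<Longrightarrow> starlike_quot f z = Psi (w z)"
    using assms by (auto simp: class_SG_def subordinate_def)
  have "f \<in> class_S"
    using assms by (simp add: class_SG_def)
  define c where "c = (\<lambda>n. fps_expansion w 0 $ n)"
  have sw: "schwarz_function w"
    using w by (simp add: schwarz_function_def)
  have A: "inv_coeff f 2 = - c 1 / 2" "inv_coeff f 3 = 5/12 * (c 1)\<^sup>2 - c 2 / 4"
    "inv_coeff f 4 = - (c 3 - 10/3 * c 1 * c 2 + 31/12 * (c 1)^3) / 6"
    using inv_coeff_subordinate_Psi[OF \<open>f \<in> class_S\<close> w(1,2)] quot by (simp_all add: c_def)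
  have c1: "norm (c 1) \<le> 1"
    using schwarz_function_deriv_le[OF sw] by (simp add: c_def fps_expansion_nth_1)
  have c2: "norm (c 2) \<le> 1 - (norm (c 1))\<^sup>2"
    using schwarz_function_coeff2_le[OF sw] by (simp add: c_def)
  show "norm (inv_coeff f 2) \<le> 1/2"
    using c1 by (simp add: A norm_divide)
  have "norm (inv_coeff f 3) \<le> 5/12 * (norm (c 1))\<^sup>2 + norm (c 2) / 4"
    unfolding A using norm_triangle_ineq4[of "5/12 * (c 1)\<^sup>2" "c 2 / 4"]
    by (simp add: norm_mult norm_power norm_divide)
  also have "\<dots> \<le> 5/12"
    using c2 c1 power_le_one[of "norm (c 1)" 2] by simp
  finally show "norm (inv_coeff f 3) \<le> 5/12" .
  have "norm (inv_coeff f 4) = norm (c 3 - 10/3 * c 1 * c 2 + 31/12 * (c 1)^3) / 6"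
    by (simp only: A norm_divide norm_minus_cancel) simp
  then show "norm (inv_coeff f 4) \<le> 31/72"
    using schwarz_function_coeff3_functional_le[OF sw, folded c_def] by simp
qed

section \<open>The extremal function\<close>

lemma inj_on_Re_deriv_pos:
  assumes S: "convex S" and F: "\<And>z. z \<in> S \<Longrightarrow> (F has_field_derivative F' z) (at z)"
    and pos: "\<And>z. z \<in> S \<Longrightarrow> Re (F' z) > 0"
  shows "inj_on F S"
proof (rule inj_onI, rule ccontr)
  fix a b
  assume ab: "a \<in> S" "b \<in> S" "F a = F b" "a \<noteq> b"
  have seg: "closed_segment a b \<subseteq> S"
    using ab(1,2) S by (rule closed_segment_subset)
  define G where "G z = F z / (b - a)" for z
  have G': "(G has_field_derivative F' u / (b - a)) (at u)" if "u \<in> closed_segment a b" for u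
    unfolding G_def using F[of u] seg that ab(4) by (auto intro!: derivative_eq_intros)
  obtain u where u: "u \<in> closed_segment a b" "Re (G b) - Re (G a) = Re (F' u / (b - a) * (b - a))"
    using complex_mvt_line[of a b G "\<lambda>u. F' u / (b - a)", OF G'] by blast
  have "Re (G b) - Re (G a) = 0"
    using ab(3) by (simp add: G_def)
  with u(2) ab(4) have "Re (F' u) = 0"
    by simp
  with pos[of u] u(1) seg show False
    by auto
qed

lemma inj_on_add_exp_left_half_plane:
  assumes h: "\<And>z. z \<in> ball 0 1 \<Longrightarrow> (h has_field_derivative h' z) (at z)"
    and pos: "\<And>z. z \<in> ball 0 1 \<Longrightarrow> Re (1 + z * h' z) > 0"
  shows "inj_on (\<lambda>\<zeta>. \<zeta> + h (exp \<zeta>)) {\<zeta>. Re \<zeta> < 0}"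
proof (rule inj_on_Re_deriv_pos)
  show "convex {\<zeta>. Re \<zeta> < 0}"
    by (rule convex_halfspace_Re_lt)
  fix \<zeta> :: complex
  assume "\<zeta> \<in> {\<zeta>. Re \<zeta> < 0}"
  then have \<zeta>: "exp \<zeta> \<in> ball 0 1"
    by simp
  have "((\<lambda>\<zeta>. h (exp \<zeta>)) has_field_derivative h' (exp \<zeta>) * exp \<zeta>) (at \<zeta>)"
    by (rule DERIV_chain2[OF h[OF \<zeta>] DERIV_exp])
  from DERIV_add[OF DERIV_ident this]
  show "((\<lambda>\<zeta>. \<zeta> + h (exp \<zeta>)) has_field_derivative 1 + exp \<zeta> * h' (exp \<zeta>)) (at \<zeta>)"
    by (simp add: mult.commute)
  show "Re (1 + exp \<zeta> * h' (exp \<zeta>)) > 0"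
    using pos[OF \<zeta>] .
qed

lemma inj_on_mult_exp:
  assumes h: "\<And>z. z \<in> ball 0 1 \<Longrightarrow> (h has_field_derivative h' z) (at z)"
    and pos: "\<And>z. z \<in> ball 0 1 \<Longrightarrow> Re (1 + z * h' z) > 0"
  shows "inj_on (\<lambda>z. z * exp (h z)) (ball 0 1)"
proof (rule inj_onI)
  define H where "H = {\<zeta>::complex. Re \<zeta> < 0}"
  \<comment> \<open>F \<zeta> is a logarithm of the function at exp \<zeta>.\<close>
  define F where "F \<zeta> = \<zeta> + h (exp \<zeta>)" for \<zeta>
  have inj_F: "inj_on F H"
    unfolding F_def[abs_def] H_def using h pos by (rule inj_on_add_exp_left_half_plane)
  fix z1 z2
  assume z: "z1 \<in> ball 0 1" "z2 \<in> ball 0 1" and eq: "z1 * exp (h z1) = z2 * exp (h z2)"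
  show "z1 = z2"
  proof (cases "z1 = 0 \<or> z2 = 0")
    case True
    with eq show ?thesis
      by auto
  next
    case False
    define \<zeta>1 \<zeta>2 where "\<zeta>1 = Ln z1" and "\<zeta>2 = Ln z2"
    have exp_\<zeta>: "exp \<zeta>1 = z1" "exp \<zeta>2 = z2" and "\<zeta>1 \<in> H" "\<zeta>2 \<in> H"
      using False z by (simp_all add: \<zeta>1_def \<zeta>2_def H_def)
    have "exp (F \<zeta>1) = exp (F \<zeta>2)"
      using eq by (simp add: F_def exp_add exp_\<zeta> mult.commute)
    then obtain n :: int where n: "F \<zeta>1 = F \<zeta>2 + of_int (2 * n) * pi * \<i>"
      unfolding exp_eq by blast
    define \<zeta>3 where "\<zeta>3 = \<zeta>2 + of_int (2 * n) * pi * \<i>"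
    have "exp \<zeta>3 = exp \<zeta>2"
      unfolding exp_eq \<zeta>3_def by blast
    then have "exp \<zeta>3 = z2" "\<zeta>3 \<in> H"
      using exp_\<zeta>(2) \<open>\<zeta>2 \<in> H\<close> by (simp_all add: \<zeta>3_def H_def)
    moreover have "F \<zeta>3 = F \<zeta>2 + of_int (2 * n) * pi * \<i>"
      using \<open>exp \<zeta>3 = exp \<zeta>2\<close> by (simp only: F_def \<zeta>3_def) simp
    ultimately have "\<zeta>1 = \<zeta>3"
      using inj_onD[OF inj_F _ \<open>\<zeta>1 \<in> H\<close>] n by simp
    with exp_\<zeta>(1) \<open>exp \<zeta>3 = z2\<close> show ?thesis
      by blast
  qed
qed

lemma exists_class_S_starlike_quot_eq_Psi:
  "\<exists>f\<in>class_S. \<forall>z\<in>ball 0 1. starlike_quot f z = Psi z"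
proof -
  define q where "q = diff_quot0 Psi"
  have Psi_eq: "Psi z = 1 + z * q z" for z
    using diff_quot0_eq[of Psi z] by (simp add: q_def Psi_def)
  have "q holomorphic_on ball 0 1"
    unfolding q_def by (rule holomorphic_on_diff_quot0[OF holomorphic_on_Psi])
  then obtain h0 where h0: "\<And>z. z \<in> ball 0 1 \<Longrightarrow> (h0 has_field_derivative q z) (at z within ball 0 1)"
    using holomorphic_convex_primitive'[OF convex_ball open_ball] by blast
  define h where "h z = h0 z - h0 0" for z
  have h: "(h has_field_derivative q z) (at z)" if "z \<in> ball 0 1" for z
    using h0[OF that] that unfolding h_def[abs_def]
    by (auto simp: at_within_open[OF _ open_ball] intro!: derivative_eq_intros)
  define f where "f z = z * exp (h z)" for z
  have f': "(f has_field_derivative exp (h z) * Psi z) (at z)" if "z \<in> ball 0 1" for z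
    unfolding f_def[abs_def] Psi_eq using h[OF that]
    by (auto intro!: derivative_eq_intros simp: algebra_simps)
  then have deriv_f: "deriv f z = exp (h z) * Psi z" if "z \<in> ball 0 1" for z
    using that by (simp add: DERIV_imp_deriv)
  show ?thesis
  proof (intro bexI ballI)
    have "f holomorphic_on ball 0 1"
      unfolding holomorphic_on_open[OF open_ball] using f' by blast
    moreover have "inj_on f (ball 0 1)"
      unfolding f_def[abs_def] using h Re_Psi_pos by (intro inj_on_mult_exp) (auto simp: Psi_eq)
    moreover have "deriv f 0 = 1"
      using deriv_f[of 0] by (simp add: h_def Psi_def)
    ultimately show "f \<in> class_S"
      by (simp add: class_S_def f_def)
    show "starlike_quot f z = Psi z" if "z \<in> ball 0 1" for z
      using deriv_f[OF that] by (simp add: starlike_quot_def f_def Psi_def)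
  qed
qed

lemma class_SG_extremal:
  obtains f where "f \<in> class_SG" "inv_coeff f 2 = -1/2" "inv_coeff f 3 = 5/12"
proof -
  obtain f where f: "f \<in> class_S" and quot: "\<And>z. z \<in> ball 0 1 \<Longrightarrow> starlike_quot f z = Psi z"
    using exists_class_S_starlike_quot_eq_Psi by blast
  have "f \<in> class_SG"
    using f quot unfolding class_SG_def subordinate_def
    by (auto intro!: exI[of _ "\<lambda>z. z"])
  moreover have "fps_expansion (\<lambda>z. z) 0 = fps_X"
    by (rule fps_expansion_eqI) (rule has_fps_expansion_fps_X)
  ultimately show ?thesis
    using inv_coeff_subordinate_Psi[of f "\<lambda>z. z"] f quot by (intro that) auto
qed

theorem theorem4:
  shows "(\<forall>f\<in>class_SG.
           norm (inv_coeff f 2) \<le> 1/2 \<and>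
           norm (inv_coeff f 3) \<le> 5/12 \<and>
           norm (inv_coeff f 4) \<le> 31/72) \<and>
         (\<exists>f\<in>class_SG. norm (inv_coeff f 2) = 1/2) \<and>
         (\<exists>f\<in>class_SG. norm (inv_coeff f 3) = 5/12)"
proof -
  obtain f where f: "f \<in> class_SG" "inv_coeff f 2 = -1/2" "inv_coeff f 3 = 5/12"
    by (rule class_SG_extremal)
  then have "norm (inv_coeff f 2) = 1/2" "norm (inv_coeff f 3) = 5/12"
    by (simp_all only: norm_minus_cancel norm_divide) simp_all
  with f(1) show ?thesis
    using class_SG_inv_coeff_le by blast
qed

end
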